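(* Let $X$ be a Sturmian word and let $P$ be a palindrome that is maximal in $X$. Then $P$ also has a non-maximal occurrence in $X$ which is a proper factor of a same-centric maximal palindrome: there are positions $i'<i\le j<j'$ with $i'\ge 2$, $i+j=i'+j'$, $X[i..j]=P$, $X[i-1]=X[j+1]$, $X[i'..j']$ a palindrome, and $X[i'-1]\neq X[j'+1]$.
   Context: A Sturmian word is a right-infinite aperiodic word over $\{a,b\}$ with exactly $n+1$ factors of each length $n$. $X[i..j]$ denotes the factor of $X$ from position $i$ to position $j$. A palindrome is a word equal to its reverse. A palindrome $P$ is maximal in $X$ if $lPl'$ is a factor of $X$ for some letters $l\neq l'$. *)

theory Defs
  imports Main
begin

datatype letter = a | b

text \<open>Right-infinite words are functions nat => letter, positions start at 0.\<close>
type_synonym word = "nat \<Rightarrow> letter"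

definition fac :: "word \<Rightarrow> nat \<Rightarrow> nat \<Rightarrow> letter list" where
  "fac X i j = map X [i..<Suc j]"

definition is_factor :: "word \<Rightarrow> letter list \<Rightarrow> bool" where
  "is_factor X u \<longleftrightarrow> (\<exists>i. map (\<lambda>k. X (i + k)) [0..<length u] = u)"

definition factors_of_length :: "word \<Rightarrow> nat \<Rightarrow> letter list set" where
  "factors_of_length X n = {u. length u = n \<and> is_factor X u}"

definition eventually_periodic :: "word \<Rightarrow> bool" where
  "eventually_periodic X \<longleftrightarrow> (\<exists>p>0. \<exists>N. \<forall>n\<ge>N. X (n + p) = X n)"

definition sturmian :: "word \<Rightarrow> bool" where
  "sturmian X \<longleftrightarrow> \<not> eventually_periodic X \<and>
     (\<forall>n. card (factors_of_length X n) = n + 1)"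

definition palindrome :: "'a list \<Rightarrow> bool" where
  "palindrome u \<longleftrightarrow> rev u = u"

definition maximal_pal :: "word \<Rightarrow> letter list \<Rightarrow> bool" where
  "maximal_pal X P \<longleftrightarrow> (\<exists>l l'. l \<noteq> l' \<and> is_factor X (l # P @ [l']))"

end

theory Submission
  imports Defs
begin

text \<open>Factor sets of Sturmian words are closed under reversal, so a maximal palindrome \<open>P\<close>,
  occurring as \<open>l P l'\<close> with \<open>l \<noteq> l'\<close>, also occurs as \<open>l' P\<close> and is left special.  A Sturmian
  word has exactly one left special factor of each length, so these are prefixes of one another;
  hence \<open>P c\<close> is left special for some letter \<open>c\<close> and \<open>c P c\<close> is a factor.
  If no occurrence of \<open>P\<close> were properly inside a maximal palindrome with the same centre, the
  palindrome \<open>P\<close> at every occurrence of \<open>c P c\<close> would grow symmetrically up to the start of the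
  word.  Two palindromic prefixes whose centres are \<open>\<delta>\<close> apart give the shorter one period
  \<open>2\<delta>\<close>, which creates a further occurrence of \<open>c P c\<close>; iterating, the whole word has period
  \<open>2\<delta>\<close>, which a Sturmian word cannot have.\<close>

lemma letter_cases_other: "(x::letter) \<noteq> y \<Longrightarrow> z = x \<or> z = y"
  by (cases x; cases y; cases z) auto

section \<open>Blocks and occurrences\<close>

definition block :: "word \<Rightarrow> nat \<Rightarrow> nat \<Rightarrow> letter list" where
  "block X i n = map (\<lambda>k. X (i + k)) [0..<n]"

lemma length_block [simp]: "length (block X i n) = n"
  by (simp add: block_def)

lemma nth_block [simp]: "k < n \<Longrightarrow> block X i n ! k = X (i + k)"
  by (simp add: block_def)

lemma block_add: "block X i (m + n) = block X i m @ block X (i + m) n"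
  by (rule nth_equalityI) (auto simp: nth_append ac_simps)

lemma block_Suc: "block X i (Suc n) = block X i n @ [X (i + n)]"
  by (simp add: block_def)

lemma block_Suc_Cons: "block X i (Suc n) = X i # block X (Suc i) n"
  using block_add[of X i 1 n] by (simp add: block_def)

lemma is_factor_block: "is_factor X (block X i n)"
  unfolding is_factor_def block_def by auto

lemma fac_eq_block: "fac X i j = block X i (Suc j - i)"
  by (rule nth_equalityI) (auto simp: fac_def simp del: upt_Suc)

definition occurs_at :: "word \<Rightarrow> letter list \<Rightarrow> nat \<Rightarrow> bool" where
  "occurs_at X u i \<longleftrightarrow> block X i (length u) = u"

lemma is_factor_iff_occurs_at: "is_factor X u \<longleftrightarrow> (\<exists>i. occurs_at X u i)"
  unfolding is_factor_def occurs_at_def block_def ..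

lemma occurs_at_Nil [simp]: "occurs_at X [] i"
  by (simp add: occurs_at_def block_def)

lemma occurs_at_append:
  "occurs_at X (u @ w) i \<longleftrightarrow> occurs_at X u i \<and> occurs_at X w (i + length u)"
  by (simp add: occurs_at_def block_add append_eq_append_conv)

lemma occurs_at_Cons: "occurs_at X (c # u) i \<longleftrightarrow> X i = c \<and> occurs_at X u (Suc i)"
  by (simp add: occurs_at_def block_Suc_Cons)

lemma occurs_at_nth: "occurs_at X u i \<Longrightarrow> k < length u \<Longrightarrow> X (i + k) = u ! k"
  unfolding occurs_at_def by (metis nth_block)

lemma is_factor_appendD1: "is_factor X (u @ w) \<Longrightarrow> is_factor X u"
  and is_factor_appendD2: "is_factor X (u @ w) \<Longrightarrow> is_factor X w"
  by (auto simp: is_factor_iff_occurs_at occurs_at_append)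

lemma is_factor_ConsD: "is_factor X (c # u) \<Longrightarrow> is_factor X u"
  using is_factor_appendD2[of X "[c]" u] by simp

lemma is_factor_snocD: "is_factor X (u @ [c]) \<Longrightarrow> is_factor X u"
  by (rule is_factor_appendD1)

lemma is_factor_extend_right: "is_factor X u \<Longrightarrow> \<exists>c. is_factor X (u @ [c])"
  by (metis block_Suc is_factor_block is_factor_iff_occurs_at occurs_at_def)

section \<open>Special factors and factor complexity\<close>

definition right_special :: "word \<Rightarrow> letter list \<Rightarrow> bool" where
  "right_special X u \<longleftrightarrow> is_factor X (u @ [a]) \<and> is_factor X (u @ [b])"

definition left_special :: "word \<Rightarrow> letter list \<Rightarrow> bool" where
  "left_special X u \<longleftrightarrow> is_factor X (a # u) \<and> is_factor X (b # u)"

lemma right_specialI: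
  "x \<noteq> y \<Longrightarrow> is_factor X (u @ [x]) \<Longrightarrow> is_factor X (u @ [y]) \<Longrightarrow> right_special X u"
  unfolding right_special_def by (cases x; cases y) auto

lemma left_specialI:
  "x \<noteq> y \<Longrightarrow> is_factor X (x # u) \<Longrightarrow> is_factor X (y # u) \<Longrightarrow> left_special X u"
  unfolding left_special_def by (cases x; cases y) auto

lemma right_specialD: "right_special X u \<Longrightarrow> is_factor X (u @ [c])"
  unfolding right_special_def by (cases c) auto

lemma left_specialD: "left_special X u \<Longrightarrow> is_factor X (c # u)"
  unfolding left_special_def by (cases c) auto

lemma left_special_is_factor: "left_special X u \<Longrightarrow> is_factor X u"
  using is_factor_ConsD left_specialD by blast

lemma right_special_is_factor: "right_special X u \<Longrightarrow> is_factor X u"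
  using is_factor_snocD right_specialD by blast

lemma left_special_snocD: "left_special X (u @ [c]) \<Longrightarrow> left_special X u"
  unfolding left_special_def using is_factor_snocD by (metis append_Cons)

lemma factors_of_length_iff: "u \<in> factors_of_length X n \<longleftrightarrow> length u = n \<and> is_factor X u"
  by (simp add: factors_of_length_def)

lemma finite_factors_of_length: "finite (factors_of_length X n)"
proof (rule finite_subset)
  show "factors_of_length X n \<subseteq> {xs. set xs \<subseteq> UNIV \<and> length xs = n}"
    by (auto simp: factors_of_length_def)
  have "(UNIV :: letter set) = {a, b}"
    using letter.exhaust by auto
  then have "finite (UNIV :: letter set)"
    by (metis finite.emptyI finite.insertI)
  then show "finite {xs. set xs \<subseteq> (UNIV :: letter set) \<and> length xs = n}"
    by (rule finite_lists_length_eq)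
qed

lemma card_factors_of_length_0: "card (factors_of_length X 0) = 1"
proof -
  have "factors_of_length X 0 = {[]}"
    by (auto simp: factors_of_length_def is_factor_def)
  then show ?thesis by simp
qed

lemma card_add_le_of_disjoint_injections:
  assumes "finite C" "inj_on f A" "inj_on g B" "f ` A \<subseteq> C" "g ` B \<subseteq> C"
    and "f ` A \<inter> g ` B = {}"
  shows "card A + card B \<le> card C"
proof -
  have "finite (f ` A)" "finite (g ` B)"
    using assms(1,4,5) finite_subset by blast+
  then have "card A + card B = card (f ` A \<union> g ` B)"
    using assms(2,3,6) by (simp add: card_Un_disjoint card_image)
  also have "\<dots> \<le> card C"
    using assms by (intro card_mono) auto
  finally show ?thesis .
qed

text \<open>Each factor of length \<open>n\<close> has a right extension, and each right special one has two.\<close>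

lemma card_factors_of_length_Suc_right_special:
  assumes "R \<subseteq> factors_of_length X n" "\<forall>u\<in>R. right_special X u"
  shows "card (factors_of_length X n) + card R \<le> card (factors_of_length X (Suc n))"
proof -
  define ext where "ext u = (if is_factor X (u @ [a]) then a else b)" for u
  have ext: "is_factor X (u @ [ext u])" if u: "is_factor X u" for u
  proof -
    obtain c where "is_factor X (u @ [c])"
      using is_factor_extend_right[OF u] by blast
    then show ?thesis
      unfolding ext_def by (cases c) auto
  qed
  show ?thesis
  proof (rule card_add_le_of_disjoint_injections)
    show "(\<lambda>u. u @ [ext u]) ` factors_of_length X n \<subseteq> factors_of_length X (Suc n)"
      using ext by (auto simp: factors_of_length_iff)
    show "(\<lambda>u. u @ [b]) ` R \<subseteq> factors_of_length X (Suc n)"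
      using assms by (auto simp: factors_of_length_iff right_special_def)
    show "(\<lambda>u. u @ [ext u]) ` factors_of_length X n \<inter> (\<lambda>u. u @ [b]) ` R = {}"
      using assms(2) by (auto simp: ext_def right_special_def)
  qed (simp_all add: finite_factors_of_length inj_on_def)
qed

lemma card_factors_of_length_Suc_left_special:
  assumes "R \<subseteq> factors_of_length X n" "\<forall>u\<in>R. left_special X u"
    and extendable: "\<forall>u\<in>factors_of_length X n. \<exists>c. is_factor X (c # u)"
  shows "card (factors_of_length X n) + card R \<le> card (factors_of_length X (Suc n))"
proof -
  define ext where "ext u = (if is_factor X (a # u) then a else b)" for u
  have ext: "is_factor X (ext u # u)" if u: "u \<in> factors_of_length X n" for u
  proof -
    obtain c where "is_factor X (c # u)"
      using extendable u by blast
    then show ?thesis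
      unfolding ext_def by (cases c) auto
  qed
  show ?thesis
  proof (rule card_add_le_of_disjoint_injections)
    show "(\<lambda>u. ext u # u) ` factors_of_length X n \<subseteq> factors_of_length X (Suc n)"
      using ext by (auto simp: factors_of_length_iff)
    show "(\<lambda>u. b # u) ` R \<subseteq> factors_of_length X (Suc n)"
      using assms by (auto simp: factors_of_length_iff left_special_def)
    show "(\<lambda>u. ext u # u) ` factors_of_length X n \<inter> (\<lambda>u. b # u) ` R = {}"
      using assms(2) by (auto simp: ext_def left_special_def)
  qed (simp_all add: finite_factors_of_length inj_on_def)
qed

text \<open>A block that is not right special has only one continuation by a letter.\<close>

lemma block_eq_propagate:
  assumes "block X p n = block X q n" "\<forall>t<T. \<not> right_special X (block X (p + t) n)"
  shows "block X p (T + n) = block X q (T + n)"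
  using assms(2)
proof (induction T)
  case 0
  then show ?case using assms(1) by simp
next
  case (Suc T)
  then have agree: "block X p (T + n) = block X q (T + n)"
    by simp
  then have same_block: "block X (p + T) n = block X (q + T) n"
    unfolding block_add by simp
  have "is_factor X (block X (p + T) n @ [X (p + T + n)])"
    "is_factor X (block X (p + T) n @ [X (q + T + n)])"
    using is_factor_block[of X "p + T" "Suc n"] is_factor_block[of X "q + T" "Suc n"]
    unfolding same_block block_Suc by simp_all
  moreover have "\<not> right_special X (block X (p + T) n)"
    using Suc.prems by simp
  ultimately have "X (p + (T + n)) = X (q + (T + n))"
    using right_specialI by (metis add.assoc)
  then show ?case
    using agree by (simp add: block_Suc)
qed

lemma eventually_periodic_if_no_right_special_blocks:
  assumes "\<forall>t. \<not> right_special X (block X (r + t) n)"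
  shows "eventually_periodic X"
proof -
  let ?F = "factors_of_length X n" and ?w = "\<lambda>t. block X (r + t) n"
  have "?w ` {0..card ?F} \<subseteq> ?F"
    by (auto simp: factors_of_length_iff is_factor_block)
  then have "\<not> inj_on ?w {0..card ?F}"
    using card_inj_on_le[of ?w "{0..card ?F}" ?F] finite_factors_of_length by force
  then obtain t1 t2 where t12: "t1 < t2" "?w t1 = ?w t2"
    unfolding inj_on_def by (metis linorder_neqE_nat)
  have shifted: "X (r + t1 + k) = X (r + t2 + k)" for k
  proof -
    have "\<forall>t<Suc k. \<not> right_special X (block X (r + t1 + t) n)"
      using assms by (simp add: add.assoc)
    then have "block X (r + t1) (Suc k + n) = block X (r + t2) (Suc k + n)"
      by (rule block_eq_propagate[OF t12(2)])
    then have "block X (r + t1) (Suc k + n) ! k = block X (r + t2) (Suc k + n) ! k"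
      by (rule arg_cong)
    then show ?thesis
      by simp
  qed
  have "X (m + (t2 - t1)) = X m" if "m \<ge> r + t1" for m
  proof -
    obtain k where "m = r + t1 + k"
      using \<open>m \<ge> r + t1\<close> le_Suc_ex by blast
    then show ?thesis
      using shifted[of k] t12(1) by (simp add: ac_simps)
  qed
  then show ?thesis
    unfolding eventually_periodic_def using t12(1) zero_less_diff by blast
qed

lemma eventually_periodic_if_card_factors_of_length_le:
  assumes "card (factors_of_length X k) \<le> k"
  shows "eventually_periodic X"
proof -
  have "\<exists>j<k. \<forall>w. length w = j \<longrightarrow> \<not> right_special X w"
  proof (rule ccontr)
    assume "\<not> ?thesis"
    then have special: "\<forall>j<k. \<exists>w. length w = j \<and> right_special X w"
      by auto
    have "j + 1 \<le> card (factors_of_length X j)" if "j \<le> k" for j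
      using that
    proof (induction j)
      case 0
      then show ?case by (simp add: card_factors_of_length_0)
    next
      case (Suc j)
      obtain w where w: "length w = j" "right_special X w"
        using special Suc.prems Suc_le_lessD by blast
      then have "{w} \<subseteq> factors_of_length X j"
        by (simp add: factors_of_length_iff right_special_is_factor)
      then have "card (factors_of_length X j) + 1 \<le> card (factors_of_length X (Suc j))"
        using card_factors_of_length_Suc_right_special[of "{w}"] w by simp
      then show ?case
        using Suc by simp
    qed
    from this[of k] show False
      using assms by simp
  qed
  then obtain j where "\<forall>w. length w = j \<longrightarrow> \<not> right_special X w"
    by blast
  then show ?thesis
    using eventually_periodic_if_no_right_special_blocks[of X 0 j] by simp
qed

section \<open>Sturmian words\<close>

lemma card_factors_of_length_sturmian:
  "sturmian X \<Longrightarrow> card (factors_of_length X n) = n + 1"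
  by (simp add: sturmian_def)

lemma sturmian_not_eventually_periodic: "sturmian X \<Longrightarrow> \<not> eventually_periodic X"
  by (simp add: sturmian_def)

lemma sturmian_right_special_unique:
  assumes "sturmian X" "right_special X u" "right_special X v" "length u = length v"
  shows "u = v"
proof (rule ccontr)
  assume "u \<noteq> v"
  have "{u, v} \<subseteq> factors_of_length X (length u)"
    using assms right_special_is_factor by (auto simp: factors_of_length_iff)
  from card_factors_of_length_Suc_right_special[OF this] show False
    using assms \<open>u \<noteq> v\<close> by (simp add: card_factors_of_length_sturmian)
qed

text \<open>Were some factor absent from the suffix \<open>X 1 X 2 \<dots>\<close>, that suffix would have too few
  factors of that length and hence be eventually periodic.\<close>

lemma sturmian_occurs_at_positive:
  assumes "sturmian X" "is_factor X u"
  shows "\<exists>i>0. occurs_at X u i"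
proof (rule ccontr)
  assume not_later: "\<not> ?thesis"
  define Y where "Y t = X (Suc t)" for t
  let ?k = "length u"
  have "factors_of_length Y ?k \<subseteq> factors_of_length X ?k - {u}"
  proof
    fix w assume "w \<in> factors_of_length Y ?k"
    then obtain i where "length w = ?k" "occurs_at Y w i"
      by (auto simp: factors_of_length_iff is_factor_iff_occurs_at)
    moreover have "occurs_at X w (Suc i)"
      using \<open>occurs_at Y w i\<close> by (simp add: occurs_at_def block_def Y_def)
    ultimately show "w \<in> factors_of_length X ?k - {u}"
      using not_later by (auto simp: factors_of_length_iff is_factor_iff_occurs_at)
  qed
  then have "card (factors_of_length Y ?k) \<le> card (factors_of_length X ?k - {u})"
    by (simp add: card_mono finite_factors_of_length)
  also have "\<dots> = ?k"
    using assms by (simp add: factors_of_length_iff card_factors_of_length_sturmian)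
  finally obtain p N where p: "p > 0" "\<forall>n\<ge>N. Y (n + p) = Y n"
    using eventually_periodic_if_card_factors_of_length_le unfolding eventually_periodic_def
    by blast
  have "X (n + p) = X n" if "n \<ge> Suc N" for n
    using p(2) that by (cases n) (auto simp: Y_def)
  then have "eventually_periodic X"
    unfolding eventually_periodic_def using p(1) by blast
  then show False
    using assms(1) sturmian_not_eventually_periodic by blast
qed

lemma sturmian_occurs_after:
  assumes "sturmian X" "occurs_at X u p"
  shows "\<exists>i>p. occurs_at X u i"
proof -
  obtain s where "s > 0" "occurs_at X (block X 0 (p + length u)) s"
    using sturmian_occurs_at_positive[OF assms(1) is_factor_block] by blast
  then have "occurs_at X (block X 0 p @ u) s"
    using assms(2) by (simp add: block_add occurs_at_def)
  then have "occurs_at X u (s + p)"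
    by (simp add: occurs_at_append)
  then show ?thesis
    using \<open>s > 0\<close> by (intro exI[of _ "s + p"]) simp
qed

lemma sturmian_is_factor_extend_left:
  assumes "sturmian X" "is_factor X u"
  shows "\<exists>c. is_factor X (c # u)"
proof -
  obtain i where "i > 0" "occurs_at X u i"
    using sturmian_occurs_at_positive[OF assms] by blast
  then have "occurs_at X (X (i - 1) # u) (i - 1)"
    by (simp add: occurs_at_Cons)
  then show ?thesis
    using is_factor_iff_occurs_at by blast
qed

lemma sturmian_left_special_unique:
  assumes "sturmian X" "left_special X u" "left_special X v" "length u = length v"
  shows "u = v"
proof (rule ccontr)
  assume "u \<noteq> v"
  have "{u, v} \<subseteq> factors_of_length X (length u)"
    using assms left_special_is_factor by (auto simp: factors_of_length_iff)
  from card_factors_of_length_Suc_left_special[OF this] show False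
    using assms \<open>u \<noteq> v\<close> sturmian_is_factor_extend_left[OF assms(1)]
    by (simp add: card_factors_of_length_sturmian factors_of_length_iff)
qed

lemma sturmian_left_special_exists:
  assumes "sturmian X"
  shows "\<exists>u. length u = n \<and> left_special X u"
proof -
  let ?F = "factors_of_length X n" and ?G = "factors_of_length X (Suc n)"
  have "tl ` ?G \<subseteq> ?F"
    by (auto simp: factors_of_length_iff is_factor_ConsD length_Suc_conv)
  then have "\<not> inj_on tl ?G"
    using card_inj_on_le[of tl ?G ?F] assms
    by (auto simp: finite_factors_of_length card_factors_of_length_sturmian)
  then obtain z1 z2 where z: "z1 \<in> ?G" "z2 \<in> ?G" "z1 \<noteq> z2" "tl z1 = tl z2"
    unfolding inj_on_def by blast
  then obtain c1 c2 w where "z1 = c1 # w" "z2 = c2 # w"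
    by (cases z1; cases z2) (auto simp: factors_of_length_iff)
  with z show ?thesis
    using left_specialI by (auto simp: factors_of_length_iff)
qed

lemma sturmian_left_special_extend:
  assumes "sturmian X" "left_special X u"
  shows "\<exists>c. left_special X (u @ [c])"
proof -
  obtain w where w: "length w = Suc (length u)" "left_special X w"
    using sturmian_left_special_exists[OF assms(1)] by blast
  then obtain u' c where "w = u' @ [c]"
    by (metis length_Suc_conv rev_exhaust list.distinct(1))
  moreover have "u' = u"
    using sturmian_left_special_unique[OF assms(1) _ assms(2)] left_special_snocD w \<open>w = u' @ [c]\<close>
    by simp
  ultimately show ?thesis
    using w by blast
qed

text \<open>Before the first right special block the blocks are pairwise distinct, since a repetition
  would propagate to a right special block earlier than the first one.\<close>

lemma sturmian_right_special_block_within: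
  assumes "sturmian X"
  shows "\<exists>e\<le>n. right_special X (block X (r + e) n)"
proof -
  let ?w = "\<lambda>t. block X (r + t) n"
  have "\<exists>e. right_special X (?w e)"
    using assms eventually_periodic_if_no_right_special_blocks sturmian_not_eventually_periodic
    by blast
  then obtain e where e: "right_special X (?w e)" and before: "\<forall>t<e. \<not> right_special X (?w t)"
    using exists_least_iff[of "\<lambda>e. right_special X (?w e)"] by blast
  have distinct: "?w i \<noteq> ?w k" if ik: "i < k" "k \<le> e" for i k
  proof
    assume "?w i = ?w k"
    moreover have "\<forall>t<e - k. \<not> right_special X (block X (r + i + t) n)"
      using before ik by (simp add: add.assoc)
    ultimately have "block X (r + i) (e - k + n) = block X (r + k) (e - k + n)"
      by (simp add: block_eq_propagate)
    then have "block X (r + i + (e - k)) n = block X (r + k + (e - k)) n"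
      unfolding block_add by simp
    then have "?w (i + (e - k)) = ?w e"
      using ik by (simp add: add.assoc)
    moreover have "i + (e - k) < e"
      using ik by simp
    ultimately show False
      using before e by auto
  qed
  have "inj_on ?w {0..e}"
  proof (rule inj_onI)
    fix i k assume "i \<in> {0..e}" "k \<in> {0..e}" "?w i = ?w k"
    then show "i = k"
      using distinct[of i k] distinct[of k i] by (cases i k rule: linorder_cases) auto
  qed
  moreover have "?w ` {0..e} \<subseteq> factors_of_length X n"
    by (auto simp: factors_of_length_iff is_factor_block)
  ultimately have "card {0..e} \<le> card (factors_of_length X n)"
    by (rule card_inj_on_le[OF _ _ finite_factors_of_length])
  then show ?thesis
    using e by (auto simp: card_factors_of_length_sturmian[OF assms])
qed

text \<open>The core of closure under reversal: a palindromic bispecial factor \<open>v\<close> cannot be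
  followed in only one order by two distinct letters.  Otherwise \<open>x v\<close> is the right special factor
  of its length; starting from an occurrence of \<open>y v y\<close> it is reached within \<open>|v| + 1\<close> steps, and
  the two overlapping occurrences clash by the symmetry of \<open>v\<close>.\<close>

lemma sturmian_bispecial_palindrome_swap:
  assumes st: "sturmian X" and "rev v = v" "right_special X v" "left_special X v" "x \<noteq> y"
    and "is_factor X (x # v @ [y])"
  shows "is_factor X (y # v @ [x])"
proof (rule ccontr)
  assume yvx: "\<not> is_factor X (y # v @ [x])"
  let ?m = "length v"
  obtain c where "is_factor X (c # v @ [x])"
    using sturmian_is_factor_extend_left[OF st right_specialD] assms(3) by blast
  then have "is_factor X (x # v @ [x])"
    using yvx letter_cases_other[OF assms(5), of c] by auto
  then have xv_special: "right_special X (x # v)"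
    using right_specialI[OF assms(5)] assms(6) by simp
  obtain r where yv: "occurs_at X (y # v) r"
    using left_specialD[OF assms(4)] is_factor_iff_occurs_at by blast
  then have yvz: "occurs_at X (y # v @ [X (r + Suc ?m)]) r"
    by (simp add: occurs_at_append occurs_at_Cons)
  then have "X (r + Suc ?m) \<noteq> x"
    using yvx is_factor_iff_occurs_at by auto
  then have yvy: "occurs_at X (y # v @ [y]) r"
    using yvz letter_cases_other[OF assms(5)] by auto
  obtain e where e: "e \<le> Suc ?m" "right_special X (block X (r + e) (Suc ?m))"
    using sturmian_right_special_block_within[OF st] by blast
  then have xv: "occurs_at X (x # v) (r + e)"
    using sturmian_right_special_unique[OF st _ xv_special] by (simp add: occurs_at_def)
  have "e \<noteq> 0"
    using xv yvy assms(5) by (cases e) (auto simp: occurs_at_Cons)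
  have "(v @ [y]) ! (e - 1) = x"
    using occurs_at_nth[OF yvy, of e] occurs_at_nth[OF xv, of 0] e \<open>e \<noteq> 0\<close> by simp
  moreover have "(x # v) ! (Suc ?m - e) = y"
    using occurs_at_nth[OF yvy, of "Suc ?m"] occurs_at_nth[OF xv, of "Suc ?m - e"] e \<open>e \<noteq> 0\<close>
    by (simp add: nth_append)
  then have "(v @ [x]) ! (e - 1) = y"
    using e \<open>e \<noteq> 0\<close> assms(2) rev_nth[of "Suc ?m - e" "v @ [x]"] by simp
  ultimately show False
    using assms(5) e \<open>e \<noteq> 0\<close> by (cases "e - 1 < ?m") (auto simp: nth_append)
qed

lemma sturmian_is_factor_rev:
  assumes st: "sturmian X"
  shows "is_factor X u \<Longrightarrow> is_factor X (rev u)"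
proof (induction "length u" arbitrary: u rule: less_induct)
  case less
  show ?case
  proof (cases "length u \<le> 1")
    case True
    then have "rev u = u"
      by (cases u) auto
    then show ?thesis
      using less.prems by simp
  next
    case False
    then obtain x w where "u = x # w" "w \<noteq> []"
      by (cases u) auto
    then obtain v y where u: "u = x # v @ [y]"
      by (metis rev_exhaust)
    have IH: "is_factor X w \<Longrightarrow> length w < length u \<Longrightarrow> is_factor X (rev w)" for w
      using less.hyps by blast
    have "is_factor X (x # v)" "is_factor X (v @ [y])"
      using less.prems u is_factor_appendD1[of X "x # v" "[y]"] is_factor_ConsD by auto
    then have g1: "is_factor X (rev v @ [x])" and g2: "is_factor X (y # rev v)"
      using IH[of "x # v"] IH[of "v @ [y]"] u by simp_all
    show ?thesis
    proof (cases "right_special X (rev v)")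
      case False
      obtain c where c: "is_factor X (y # rev v @ [c])"
        using is_factor_extend_right[OF g2] by auto
      then have "c = x"
        using False g1 is_factor_ConsD right_specialI by blast
      then show ?thesis
        using c u by simp
    next
      case rs: True
      show ?thesis
      proof (cases "left_special X (rev v)")
        case False
        obtain c where c: "is_factor X (c # rev v @ [x])"
          using sturmian_is_factor_extend_left[OF st g1] by auto
        then have "c = y"
          using False g2 is_factor_appendD1[of X "c # rev v" "[x]"] left_specialI by auto
        then show ?thesis
          using c u by simp
      next
        case ls: True
        have "is_factor X (v @ [c])" for c
          using IH[of "c # rev v"] left_specialD[OF ls, of c] u by simp
        then have "right_special X v"
          by (simp add: right_special_def)
        then have palindromic: "rev v = v"
          using sturmian_right_special_unique[OF st rs] by simp
        show ?thesis
        proof (cases "x = y")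
          case True
          then show ?thesis
            using less.prems u palindromic by simp
        next
          case False
          then show ?thesis
            using sturmian_bispecial_palindrome_swap[OF st palindromic] rs ls palindromic
              less.prems u by simp
        qed
      qed
    qed
  qed
qed

section \<open>Palindromic factors\<close>

lemma palindrome_Cons_snoc_iff [simp]: "palindrome (c # w @ [c]) \<longleftrightarrow> palindrome w"
  by (simp add: palindrome_def)

lemma fac_extend_both:
  assumes "0 < i" "i \<le> Suc j"
  shows "fac X (i - 1) (Suc j) = X (i - 1) # fac X i j @ [X (Suc j)]"
proof -
  have "[i - 1..<Suc (Suc j)] = (i - 1) # [i..<Suc j] @ [Suc j]"
    using assms by (simp add: upt_conv_Cons) linarith
  then show ?thesis
    by (simp add: fac_def)
qed

lemma palindrome_fac_nth:
  assumes "palindrome (fac X i j)" "i \<le> t" "t \<le> j"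
  shows "X t = X (i + j - t)"
proof -
  have "rev (fac X i j) ! (t - i) = fac X i j ! (t - i)"
    using assms(1) by (simp add: palindrome_def)
  moreover have "rev (fac X i j) ! (t - i) = fac X i j ! (j - t)"
    using assms(2,3) by (simp add: rev_nth fac_eq_block Suc_diff_le)
  ultimately show ?thesis
    using assms(2,3) by (simp add: fac_eq_block)
qed

lemma palindrome_fac_extend_same_centre:
  assumes "i \<le> j" "palindrome (fac X i j)"
  shows "palindrome (fac X 0 (i + j)) \<or>
    (\<exists>i' j'. 0 < i' \<and> i' \<le> i \<and> i' + j' = i + j \<and> palindrome (fac X i' j') \<and> X (i' - 1) \<noteq> X (j' + 1))"
    (is "_ \<or> ?maximal")
proof -
  have "r \<le> i \<Longrightarrow> palindrome (fac X (i - r) (j + r)) \<or> ?maximal" for r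
  proof (induction r)
    case 0
    then show ?case using assms(2) by simp
  next
    case (Suc r)
    consider "?maximal" | "palindrome (fac X (i - r) (j + r))"
      using Suc by fastforce
    then show ?case
    proof cases
      case 2
      show ?thesis
      proof (cases "X (i - r - 1) = X (j + r + 1)")
        case True
        have "fac X (i - r - 1) (Suc (j + r)) = X (i - r - 1) # fac X (i - r) (j + r) @ [X (Suc (j + r))]"
          using Suc.prems assms(1) by (intro fac_extend_both) simp_all
        then show ?thesis
          using 2 True by simp
      next
        case False
        then show ?thesis
          using 2 Suc.prems by (intro disjI2 exI[of _ "i - r"] exI[of _ "j + r"]) simp
      qed
    qed simp
  qed
  from this[of i] show ?thesis
    by (simp add: add.commute)
qed

lemma prefix_palindromes_period:
  assumes "palindrome (fac X 0 N)" "palindrome (fac X 0 N')" "N \<le> N'" "t \<le> N"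
  shows "X (t + (N' - N)) = X t"
  using palindrome_fac_nth[OF assms(1), of t] palindrome_fac_nth[OF assms(2), of "t + (N' - N)"] assms(3,4)
  by simp

lemma occurs_at_shift:
  assumes "occurs_at X u s" "\<forall>t<s + length u. X (t + p) = X t"
  shows "occurs_at X u (s + p)"
  unfolding occurs_at_def
proof (rule nth_equalityI)
  fix k assume "k < length (block X (s + p) (length u))"
  then have "k < length u"
    by simp
  moreover have "X (s + k + p) = X (s + k)"
    using assms(2) \<open>k < length u\<close> by simp
  ultimately show "block X (s + p) (length u) ! k = u ! k"
    using occurs_at_nth[OF assms(1)] by (simp add: ac_simps)
qed simp

text \<open>If every occurrence of \<open>Q\<close> is the centre of a palindromic prefix, two occurrences at
  distance \<open>\<delta>\<close> make \<open>2\<delta>\<close> a period of the shorter prefix, which yields a further occurrence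
  \<open>\<delta>\<close> beyond the second one; iterating, \<open>2\<delta>\<close> is a period of arbitrarily long prefixes.\<close>

lemma periodic_if_occurrences_centre_prefix_palindromes:
  assumes centred: "\<And>s. occurs_at X Q s \<Longrightarrow> palindrome (fac X 0 (2 * s + length Q - 1))"
    and "Q \<noteq> []" "occurs_at X Q s1" "occurs_at X Q s2" "s1 < s2"
  shows "X (t + 2 * (s2 - s1)) = X t"
proof -
  define \<delta> where "\<delta> = s2 - s1"
  define N where "N s = 2 * s + length Q - 1" for s
  have N_shift: "N s \<le> N (s + \<delta>)" "N (s + \<delta>) - N s = 2 * \<delta>" for s
    using assms(2) by (simp_all add: N_def)
  have period: "X (t + 2 * \<delta>) = X t"
    if "occurs_at X Q s" "occurs_at X Q (s + \<delta>)" "t \<le> N s" for s t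
    using prefix_palindromes_period[OF centred[OF that(1)] centred[OF that(2)], of t]
      that(3) N_shift[of s] unfolding N_def by simp
  have occ: "occurs_at X Q (s1 + k * \<delta>) \<and> occurs_at X Q (s1 + k * \<delta> + \<delta>)" for k
  proof (induction k)
    case 0
    then show ?case
      using assms(3-5) by (simp add: \<delta>_def)
  next
    case (Suc k)
    have "\<forall>t<s1 + k * \<delta> + length Q. X (t + 2 * \<delta>) = X t"
      using Suc.IH period[of "s1 + k * \<delta>"] unfolding N_def by auto
    then have "occurs_at X Q (s1 + k * \<delta> + 2 * \<delta>)"
      using Suc.IH occurs_at_shift by blast
    moreover have "s1 + k * \<delta> + 2 * \<delta> = s1 + Suc k * \<delta> + \<delta>"
      by simp
    moreover have "occurs_at X Q (s1 + Suc k * \<delta>)"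
      using Suc.IH by (simp add: ac_simps)
    ultimately show ?case
      by simp
  qed
  have "t \<le> t * \<delta>"
    using assms(5) by (simp add: \<delta>_def Suc_le_eq)
  moreover have "length Q > 0"
    using assms(2) by simp
  ultimately have "t \<le> N (s1 + t * \<delta>)"
    unfolding N_def distrib_left by (subst le_diff_conv2) linarith+
  then show ?thesis
    using period occ unfolding \<delta>_def by blast
qed

definition inside_same_centre_maximal_palindrome :: "word \<Rightarrow> letter list \<Rightarrow> bool" where
  "inside_same_centre_maximal_palindrome X P \<longleftrightarrow>
    (\<exists>i' i j j'. i' < i \<and> i \<le> j \<and> j < j' \<and> 1 \<le> i' \<and> i + j = i' + j' \<and>
       fac X i j = P \<and> X (i - 1) = X (j + 1) \<and>
       palindrome (fac X i' j') \<and> X (i' - 1) \<noteq> X (j' + 1))"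

lemma palindrome_grows_to_prefix_or_inside_maximal:
  assumes "palindrome P" "P \<noteq> []" "occurs_at X (c # P @ [c]) s"
  shows "palindrome (fac X 0 (2 * s + length P + 1)) \<or> inside_same_centre_maximal_palindrome X P"
proof -
  let ?i = "Suc s" and ?j = "s + length P"
  have ends: "X (?i - 1) = c" "X (?j + 1) = c" and "occurs_at X P ?i"
    using assms(3) by (simp_all add: occurs_at_Cons occurs_at_append)
  then have "palindrome (fac X ?i ?j)"
    using assms(1) by (simp add: fac_eq_block occurs_at_def)
  moreover have "?i \<le> ?j"
    using assms(2) by (cases P) auto
  ultimately consider "palindrome (fac X 0 (?i + ?j))"
    | i' j' where "0 < i'" "i' \<le> ?i" "i' + j' = ?i + ?j" "palindrome (fac X i' j')"
        "X (i' - 1) \<noteq> X (j' + 1)"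
    using palindrome_fac_extend_same_centre by blast
  then show ?thesis
  proof cases
    case 1
    then show ?thesis
      by (simp add: mult_2 add.assoc)
  next
    case (2 i' j')
    then have "i' \<noteq> ?i"
      using ends by auto
    with 2 \<open>?i \<le> ?j\<close> \<open>occurs_at X P ?i\<close> ends show ?thesis
      unfolding inside_same_centre_maximal_palindrome_def
      by (intro disjI2 exI[of _ i'] exI[of _ ?i] exI[of _ ?j] exI[of _ j'])
        (auto simp: fac_eq_block occurs_at_def)
  qed
qed

lemma sturmian_maximal_palindrome_between_equal_letters:
  assumes st: "sturmian X" and "palindrome P" "maximal_pal X P"
  shows "\<exists>c. is_factor X (c # P @ [c])"
proof -
  obtain l l' where "l \<noteq> l'" and lPl': "is_factor X (l # P @ [l'])"
    using assms(3) by (auto simp: maximal_pal_def)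
  have "is_factor X (l' # rev P)"
    using sturmian_is_factor_rev[OF st is_factor_appendD2[of X "[l]" "P @ [l']"]] lPl' by simp
  then have "left_special X P"
    using left_specialI[OF \<open>l \<noteq> l'\<close>] is_factor_appendD1[of X "l # P" "[l']"] lPl' assms(2)
    by (simp add: palindrome_def)
  then obtain c where "left_special X (P @ [c])"
    using sturmian_left_special_extend[OF st] by blast
  then show ?thesis
    using left_specialD by fastforce
qed

theorem lemma6:
  fixes X :: word and P :: "letter list"
  assumes "sturmian X" and "palindrome P" and "P \<noteq> []" and "maximal_pal X P"
  shows "\<exists>i' i j j'. i' < i \<and> i \<le> j \<and> j < j' \<and> 1 \<le> i' \<and> i + j = i' + j' \<and>
           fac X i j = P \<and> X (i - 1) = X (j + 1) \<and>
           palindrome (fac X i' j') \<and> X (i' - 1) \<noteq> X (j' + 1)"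
proof (rule ccontr)
  assume "\<not> ?thesis"
  then have no_witness: "\<not> inside_same_centre_maximal_palindrome X P"
    unfolding inside_same_centre_maximal_palindrome_def .
  obtain c where "is_factor X (c # P @ [c])"
    using sturmian_maximal_palindrome_between_equal_letters assms by blast
  then obtain s1 s2 where "occurs_at X (c # P @ [c]) s1" "occurs_at X (c # P @ [c]) s2" "s1 < s2"
    using sturmian_occurs_after[OF assms(1)] is_factor_iff_occurs_at by blast
  moreover have "palindrome (fac X 0 (2 * s + length (c # P @ [c]) - 1))"
    if "occurs_at X (c # P @ [c]) s" for s
    using palindrome_grows_to_prefix_or_inside_maximal[OF assms(2,3) that] no_witness by simp
  ultimately have "X (t + 2 * (s2 - s1)) = X t" for t
    using periodic_if_occurrences_centre_prefix_palindromes by blast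
  then have "eventually_periodic X"
    unfolding eventually_periodic_def using \<open>s1 < s2\<close> by (intro exI[of _ "2 * (s2 - s1)"]) auto
  then show False
    using sturmian_not_eventually_periodic[OF assms(1)] by blast
qed

end
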